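(* Let $m,n\geq2$, let $\mathbf p\in\mathbb R^m$, $\mathbf q\in\mathbb R^n$ be probability vectors with all entries strictly positive, and let $\Psi$ be strict Schur-concave on $\mathcal C(\mathbf p,\mathbf q)$. Let $P\in\mathcal C(\mathbf p,\mathbf q)$, and let $A=(a_{s,t})_{2\times2}$ with $a_{s,t}=p_{i_s,j_t}$ be a $2\times2$ submatrix of $P$ (distinct rows $i_1,i_2$, distinct columns $j_1,j_2$) with $\max(a_{1,1},a_{2,2})\geq\max(a_{1,2},a_{2,1})$. Let $b=\min(a_{1,2},a_{2,1})$, let $A'$ have entries $a'_{s,s}=a_{s,s}+b$ ($s=1,2$), $a'_{1,2}=a_{1,2}-b$, $a'_{2,1}=a_{2,1}-b$, and let $P'$ be obtained from $P$ by replacing $A$ with $A'$. Then $P'\in\mathcal C(\mathbf p,\mathbf q)$ and, as vectors in $\mathbb R^{mn}$, $P\preceq P'$, hence $\Psi(P')\leq\Psi(P)$. In particular, if $b>0$ then $P\prec P'$ and $\Psi(P')<\Psi(P)$.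
   Context: $\mathcal C(\mathbf p,\mathbf q)$: nonnegative $m\times n$ matrices with row sums $p_i$, column sums $q_j$, viewed as vectors in $\mathbb R^{mn}$. Majorization: for $x,y\in\mathbb R^N$ with decreasing rearrangements $\bar x,\bar y$ and $F_{\bar x}(i)=\sum_{k\le i}\bar x_k$, $x\preceq y$ if $F_{\bar x}(i)\le F_{\bar y}(i)$ for $1\le i<N$ and $F_{\bar x}(N)=F_{\bar y}(N)$; $x\prec y$ if moreover strict inequality holds for some $i<N$. $\Psi$ (symmetric) is strict Schur-concave if $x\preceq y$ implies $\Psi(x)\ge\Psi(y)$ and $x\prec y$ implies $\Psi(x)>\Psi(y)$. *)

theory Defs
  imports Complex_Main "HOL-Library.Multiset"
begin

text \<open>Vectors in R^N are represented as real lists of length N.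
  Decreasing rearrangement and partial sums F.\<close>

definition dec_rearr :: "real list \<Rightarrow> real list" where
  "dec_rearr x = rev (sort x)"

definition psum_dec :: "real list \<Rightarrow> nat \<Rightarrow> real" where
  "psum_dec x i = sum_list (take i (dec_rearr x))"

definition majorized :: "real list \<Rightarrow> real list \<Rightarrow> bool" where
  "majorized x y \<longleftrightarrow> length x = length y \<and>
     (\<forall>i. 1 \<le> i \<and> i < length x \<longrightarrow> psum_dec x i \<le> psum_dec y i) \<and>
     psum_dec x (length x) = psum_dec y (length y)"

definition strictly_majorized :: "real list \<Rightarrow> real list \<Rightarrow> bool" where
  "strictly_majorized x y \<longleftrightarrow> majorized x y \<and>
     (\<exists>i. 1 \<le> i \<and> i < length x \<and> psum_dec x i < psum_dec y i)"

text \<open>Matrices are functions nat => nat => real, indexed by i < m, j < n (0-based).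
  Flattening into R^{mn} (row-major).\<close>

definition flatten :: "nat \<Rightarrow> nat \<Rightarrow> (nat \<Rightarrow> nat \<Rightarrow> real) \<Rightarrow> real list" where
  "flatten m n P = concat (map (\<lambda>i. map (\<lambda>j. P i j) [0..<n]) [0..<m])"

definition coupling :: "nat \<Rightarrow> nat \<Rightarrow> (nat \<Rightarrow> real) \<Rightarrow> (nat \<Rightarrow> real)
    \<Rightarrow> (nat \<Rightarrow> nat \<Rightarrow> real) \<Rightarrow> bool" where
  "coupling m n p q P \<longleftrightarrow>
     (\<forall>i<m. \<forall>j<n. 0 \<le> P i j) \<and>
     (\<forall>i<m. (\<Sum>j<n. P i j) = p i) \<and>
     (\<forall>j<n. (\<Sum>i<m. P i j) = q j)"

definition prob_vec :: "nat \<Rightarrow> (nat \<Rightarrow> real) \<Rightarrow> bool" where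
  "prob_vec k p \<longleftrightarrow> (\<forall>i<k. 0 \<le> p i) \<and> (\<Sum>i<k. p i) = 1"

definition strict_schur_concave_on :: "real list set \<Rightarrow> (real list \<Rightarrow> real) \<Rightarrow> bool" where
  "strict_schur_concave_on S \<Psi> \<longleftrightarrow>
     (\<forall>x\<in>S. \<forall>y\<in>S. mset x = mset y \<longrightarrow> \<Psi> x = \<Psi> y) \<and>
     (\<forall>x\<in>S. \<forall>y\<in>S. majorized x y \<longrightarrow> \<Psi> x \<ge> \<Psi> y) \<and>
     (\<forall>x\<in>S. \<forall>y\<in>S. strictly_majorized x y \<longrightarrow> \<Psi> x > \<Psi> y)"

definition coupling_set :: "nat \<Rightarrow> nat \<Rightarrow> (nat \<Rightarrow> real) \<Rightarrow> (nat \<Rightarrow> real) \<Rightarrow> real list set" where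
  "coupling_set m n p q = flatten m n ` {P. coupling m n p q P}"

end

theory Submission
  imports Defs "HOL-Combinatorics.Permutations"
begin

(*
  Adding b to the diagonal and subtracting it from the anti-diagonal of the 2x2 submatrix adds
  the rank-one matrix b (e_i1 - e_i2) (e_j1 - e_j2)^T, whose margins vanish, so P' is again a
  coupling.  On the flattened vector the change is the composition of two transfers of mass b:
  from the off-diagonal entry that is not the minimum to the larger diagonal entry, and from the
  minimal off-diagonal entry (equal to b) to the other diagonal entry.  In each transfer the
  receiving entry ends up at least as large as both old values; as the k-th partial sum of the
  decreasing rearrangement is the largest sum over k positions, such a transfer can only increase
  these partial sums.  If b > 0 the first transfer strictly increases the sum of squares, which
  rules out equality of the decreasing rearrangements, so the majorization is strict.
*)

lemma sum_le_sum_lessThan_if_antimono_on: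
  fixes f :: "nat \<Rightarrow> 'a::ordered_comm_monoid_add"
  assumes f: "antimono_on {..<N} f" and T: "T \<subseteq> {..<N}"
  shows "sum f T \<le> sum f {..<card T}"
proof -
  define K where "K = {..<card T}"
  have fin: "finite T" using T finite_subset by blast
  have K: "K \<subseteq> {..<N}"
    using card_mono[OF _ T] by (auto simp: K_def)
  have "card (T - K) = card (K - T)"
    using fin by (simp add: card_Diff_subset_Int K_def Int_commute)
  then obtain h where h: "bij_betw h (T - K) (K - T)"
    using fin finite_same_card_bij by (metis finite_Diff finite_lessThan K_def)
  have "f l \<le> f (h l)" if "l \<in> T - K" for l
  proof -
    have "h l \<in> K - T" using h that by (auto dest: bij_betwE)
    then have "h l \<le> l" using that by (auto simp: K_def)
    then show ?thesis using f T K \<open>h l \<in> K - T\<close> that by (auto dest: monotone_onD)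
  qed
  then have "sum f (T - K) \<le> sum f (K - T)"
    using sum_mono sum.reindex_bij_betw[OF h] by metis
  then have "sum f (T \<inter> K) + sum f (T - K) \<le> sum f (K \<inter> T) + sum f (K - T)"
    by (simp add: Int_commute add_left_mono)
  then show ?thesis
    using fin by (metis sum.Int_Diff finite_lessThan K_def)
qed

lemma length_dec_rearr [simp]: "length (dec_rearr x) = length x"
  by (simp add: dec_rearr_def)

lemma mset_dec_rearr [simp]: "mset (dec_rearr x) = mset x"
  by (simp add: dec_rearr_def)

lemma antimono_on_nth_dec_rearr: "antimono_on {..<length x} (\<lambda>l. dec_rearr x ! l)"
  by (intro monotone_onI) (simp add: dec_rearr_def rev_nth sorted_nth_mono)

lemma psum_dec_eq_sum: "k \<le> length x \<Longrightarrow> psum_dec x k = (\<Sum>l<k. dec_rearr x ! l)"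
  by (simp add: psum_dec_def sum_list_sum_nth atLeast0LessThan min_absorb1)

lemma nth_dec_rearr_eq_psum_dec_diff:
  "l < length x \<Longrightarrow> dec_rearr x ! l = psum_dec x (Suc l) - psum_dec x l"
  by (simp add: psum_dec_def take_Suc_conv_app_nth)

lemma psum_dec_length: "psum_dec x (length x) = sum_list x"
  by (simp add: psum_dec_def flip: sum_mset_sum_list)

lemma psum_dec_attained:
  assumes "k \<le> length x"
  obtains S where "S \<subseteq> {..<length x}" "card S = k" "psum_dec x k = (\<Sum>l\<in>S. x ! l)"
proof -
  obtain p where p: "p permutes {..<length x}" "permute_list p x = dec_rearr x"
    using mset_eq_permutation[of "dec_rearr x" x] by auto
  have inj: "inj_on p {..<k}"
    using permutes_inj_on[OF p(1)] .
  have "psum_dec x k = (\<Sum>l<k. x ! p l)"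
    using assms p by (simp add: psum_dec_eq_sum permute_list_nth flip: p(2))
  also have "\<dots> = (\<Sum>l\<in>p ` {..<k}. x ! l)"
    using inj by (simp add: sum.reindex)
  finally show ?thesis
    using that[of "p ` {..<k}"] assms card_image[OF inj] permutes_image[OF p(1)] by fastforce
qed

lemma sum_nth_le_psum_dec:
  assumes "S \<subseteq> {..<length x}"
  shows "(\<Sum>l\<in>S. x ! l) \<le> psum_dec x (card S)"
proof -
  obtain p where p: "p permutes {..<length x}" "permute_list p (dec_rearr x) = x"
    using mset_eq_permutation[of x "dec_rearr x"] by auto
  have inj: "inj_on p S"
    using permutes_inj_on[OF p(1)] .
  have pS: "p ` S \<subseteq> {..<length x}"
    using assms permutes_image[OF p(1)] by blast
  have "(\<Sum>l\<in>S. x ! l) = (\<Sum>l\<in>S. dec_rearr x ! p l)"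
    using assms p permute_list_nth[of p "dec_rearr x"]
    by (intro sum.cong) auto
  also have "\<dots> = (\<Sum>l\<in>p ` S. dec_rearr x ! l)"
    using inj by (simp add: sum.reindex)
  also have "\<dots> \<le> (\<Sum>l<card S. dec_rearr x ! l)"
    using sum_le_sum_lessThan_if_antimono_on[OF antimono_on_nth_dec_rearr pS] card_image[OF inj]
    by simp
  also have "\<dots> = psum_dec x (card S)"
    using card_mono[OF _ assms] by (simp add: psum_dec_eq_sum)
  finally show ?thesis .
qed

definition shift_mass :: "nat \<Rightarrow> nat \<Rightarrow> real \<Rightarrow> real list \<Rightarrow> real list" where
  "shift_mass i j t x = map (\<lambda>l. x ! l + t * (of_bool (l = i) - of_bool (l = j))) [0..<length x]"

lemma length_shift_mass [simp]: "length (shift_mass i j t x) = length x"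
  by (simp add: shift_mass_def)

lemma nth_shift_mass [simp]:
  "l < length x \<Longrightarrow> shift_mass i j t x ! l = x ! l + t * (of_bool (l = i) - of_bool (l = j))"
  by (simp add: shift_mass_def)

lemma sum_nth_shift_mass:
  assumes "S \<subseteq> {..<length x}"
  shows "(\<Sum>l\<in>S. shift_mass i j t x ! l) = (\<Sum>l\<in>S. x ! l) + t * (of_bool (i \<in> S) - of_bool (j \<in> S))"
proof -
  have fin: "finite S" using assms finite_subset by blast
  have "(\<Sum>l\<in>S. shift_mass i j t x ! l) = (\<Sum>l\<in>S. x ! l + t * (of_bool (l = i) - of_bool (l = j)))"
    using assms by (intro sum.cong) auto
  also have "\<dots> = (\<Sum>l\<in>S. x ! l) + t * (of_bool (i \<in> S) - of_bool (j \<in> S))"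
    using fin by (simp add: sum.distrib sum_subtractf flip: sum_distrib_left)
  finally show ?thesis .
qed

lemma sum_list_shift_mass:
  assumes "i < length x" "j < length x"
  shows "sum_list (shift_mass i j t x) = sum_list x"
  using sum_nth_shift_mass[of "{..<length x}" x i j t] assms
  by (simp add: sum_list_sum_nth atLeast0LessThan)

lemma sum_squares_shift_mass:
  assumes "i < length x" "j < length x" "i \<noteq> j"
  shows "(\<Sum>v\<leftarrow>shift_mass i j t x. v\<^sup>2) = (\<Sum>v\<leftarrow>x. v\<^sup>2) + 2 * t * (x ! i + t - x ! j)"
proof -
  have sq: "(shift_mass i j t x ! l)\<^sup>2 = (x ! l)\<^sup>2 + of_bool (l = i) * ((x ! i + t)\<^sup>2 - (x ! i)\<^sup>2)
      + of_bool (l = j) * ((x ! j - t)\<^sup>2 - (x ! j)\<^sup>2)" if "l < length x" for l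
    using that assms(3) by auto
  have "(\<Sum>v\<leftarrow>shift_mass i j t x. v\<^sup>2) = (\<Sum>l<length x. (shift_mass i j t x ! l)\<^sup>2)"
    by (simp add: sum_list_sum_nth atLeast0LessThan)
  also have "\<dots> = (\<Sum>l<length x. (x ! l)\<^sup>2) + ((x ! i + t)\<^sup>2 - (x ! i)\<^sup>2) + ((x ! j - t)\<^sup>2 - (x ! j)\<^sup>2)"
    using assms by (simp add: sq sum.distrib del: nth_shift_mass flip: sum_distrib_right)
  also have "\<dots> = (\<Sum>v\<leftarrow>x. v\<^sup>2) + 2 * t * (x ! i + t - x ! j)"
    by (simp add: sum_list_sum_nth atLeast0LessThan power2_eq_square algebra_simps)
  finally show ?thesis .
qed

lemma psum_dec_shift_mass_mono:
  assumes "i < length x" "0 \<le> t" "x ! j \<le> x ! i + t" "k \<le> length x"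
  shows "psum_dec x k \<le> psum_dec (shift_mass i j t x) k"
proof -
  let ?y = "shift_mass i j t x"
  obtain S where S: "S \<subseteq> {..<length x}" "card S = k" "psum_dec x k = (\<Sum>l\<in>S. x ! l)"
    using psum_dec_attained[OF assms(4)] .
  have fin: "finite S" using S(1) finite_subset by blast
  \<comment> \<open>If j is in the optimal set but i is not, trade j for i: y ! i = x ! i + t \<ge> x ! j.\<close>
  define S' where "S' = (if j \<in> S \<and> i \<notin> S then insert i (S - {j}) else S)"
  have S': "S' \<subseteq> {..<length x}" "card S' = k"
    using S fin assms(1) card_Suc_Diff1[OF fin, of j] by (auto simp: S'_def card_insert_if)
  have "(\<Sum>l\<in>S. x ! l) \<le> (\<Sum>l\<in>S'. ?y ! l)"
  proof (cases "j \<in> S \<and> i \<notin> S")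
    case True
    then have "(\<Sum>l\<in>S'. ?y ! l) = (\<Sum>l\<in>S'. x ! l) + t"
      using sum_nth_shift_mass[OF S'(1), of i j t] by (auto simp: S'_def)
    also have "(\<Sum>l\<in>S'. x ! l) = (\<Sum>l\<in>S. x ! l) - x ! j + x ! i"
      using True fin by (simp add: S'_def sum_diff1)
    finally have "(\<Sum>l\<in>S'. ?y ! l) = (\<Sum>l\<in>S. x ! l) - x ! j + x ! i + t" .
    then show ?thesis using assms(3) by simp
  next
    case False
    then show ?thesis
      using sum_nth_shift_mass[OF S(1), of i j t] assms(2) by (auto simp: S'_def)
  qed
  also have "\<dots> \<le> psum_dec ?y k"
    using sum_nth_le_psum_dec[of S' ?y] S' by simp
  finally show ?thesis using S(3) by simp
qed

lemma majorized_shift_mass: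
  assumes "i < length x" "j < length x" "0 \<le> t" "x ! j \<le> x ! i + t"
  shows "majorized x (shift_mass i j t x)"
  unfolding majorized_def
  using psum_dec_shift_mass_mono[OF assms(1,3,4)] sum_list_shift_mass[OF assms(1,2)]
  by (simp add: psum_dec_length psum_dec_length[of "shift_mass i j t x", simplified])

lemma majorized_trans: "majorized x y \<Longrightarrow> majorized y z \<Longrightarrow> majorized x z"
  unfolding majorized_def by (metis order_trans)

lemma mset_eq_if_majorized_not_strictly:
  assumes maj: "majorized x y" and not_strict: "\<not> strictly_majorized x y"
  shows "mset x = mset y"
proof -
  have len: "length y = length x"
    using maj by (simp add: majorized_def)
  have psum_eq: "psum_dec x k = psum_dec y k" if k: "k \<le> length x" for k
  proof -
    consider "k = 0" | "1 \<le> k \<and> k < length x" | "k = length x"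
      using k by linarith
    then show ?thesis
      using maj not_strict len
      by cases (force simp: psum_dec_def majorized_def strictly_majorized_def)+
  qed
  have "dec_rearr x = dec_rearr y"
    using len psum_eq by (intro nth_equalityI) (auto simp: nth_dec_rearr_eq_psum_dec_diff)
  then show ?thesis
    by (metis mset_dec_rearr)
qed

lemma strictly_majorized_if_sum_squares_less:
  assumes "majorized x y" "(\<Sum>v\<leftarrow>x. v\<^sup>2) < (\<Sum>v\<leftarrow>y. v\<^sup>2)"
  shows "strictly_majorized x y"
proof (rule ccontr)
  assume "\<not> strictly_majorized x y"
  with assms(1) have "mset x = mset y"
    by (rule mset_eq_if_majorized_not_strictly)
  then have "(\<Sum>v\<leftarrow>x. v\<^sup>2) = (\<Sum>v\<leftarrow>y. v\<^sup>2)"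
    by (metis mset_map sum_mset_sum_list)
  with assms(2) show False by simp
qed

lemma majorized_shift_mass_twice:
  assumes idx: "distinct [\<alpha>, \<beta>, \<gamma>, \<delta>]" "{\<alpha>, \<beta>, \<gamma>, \<delta>} \<subseteq> {..<length x}"
    and le: "x ! \<beta> \<le> x ! \<alpha>" "0 \<le> x ! \<gamma>" "0 \<le> x ! \<delta>"
  defines "y \<equiv> shift_mass \<gamma> \<delta> (x ! \<delta>) (shift_mass \<alpha> \<beta> (x ! \<delta>) x)"
  shows "majorized x y \<and> (0 < x ! \<delta> \<longrightarrow> strictly_majorized x y)"
proof -
  define b where "b = x ! \<delta>"
  define z where "z = shift_mass \<alpha> \<beta> b x"
  have z: "length z = length x" "z ! \<gamma> = x ! \<gamma>" "z ! \<delta> = b"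
    using idx by (auto simp: z_def b_def)
  have y: "y = shift_mass \<gamma> \<delta> b z"
    by (simp add: y_def z_def b_def)
  have "majorized x z"
    unfolding z_def using idx le by (intro majorized_shift_mass) (auto simp: b_def)
  moreover have "majorized z y"
    unfolding y using idx le z by (intro majorized_shift_mass) (auto simp: b_def)
  moreover have "(\<Sum>v\<leftarrow>z. v\<^sup>2) = (\<Sum>v\<leftarrow>x. v\<^sup>2) + 2 * b * (x ! \<alpha> + b - x ! \<beta>)"
    unfolding z_def using idx by (intro sum_squares_shift_mass) auto
  moreover have "(\<Sum>v\<leftarrow>y. v\<^sup>2) = (\<Sum>v\<leftarrow>z. v\<^sup>2) + 2 * b * x ! \<gamma>"
    unfolding y using idx z sum_squares_shift_mass[of \<gamma> z \<delta> b] by auto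
  moreover have "0 \<le> b * x ! \<gamma>" "0 < b \<Longrightarrow> 0 < b * (x ! \<alpha> + b - x ! \<beta>)"
    using le by (simp_all add: b_def)
  ultimately show ?thesis
    using majorized_trans[of x z y] strictly_majorized_if_sum_squares_less[of x y]
    unfolding b_def by force
qed

lemma majorized_shift_mass_2x2:
  assumes idx: "distinct [\<alpha>, \<beta>, \<gamma>, \<delta>]" "{\<alpha>, \<beta>, \<gamma>, \<delta>} \<subseteq> {..<length x}"
    and len: "length y = length x"
    and y: "\<forall>l<length x. y ! l = x ! l + b * (of_bool (l \<in> {\<alpha>, \<gamma>}) - of_bool (l \<in> {\<beta>, \<delta>}))"
    and b: "b = min (x ! \<beta>) (x ! \<delta>)"
    and max_le: "max (x ! \<beta>) (x ! \<delta>) \<le> max (x ! \<alpha>) (x ! \<gamma>)"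
    and nonneg: "0 \<le> x ! \<alpha>" "0 \<le> x ! \<gamma>" "0 \<le> x ! \<beta>" "0 \<le> x ! \<delta>"
  shows "majorized x y \<and> (0 < b \<longrightarrow> strictly_majorized x y)"
proof -
  obtain a e where ae: "{a, e} = {\<alpha>, \<gamma>}" "x ! a = max (x ! \<alpha>) (x ! \<gamma>)" "x ! e = min (x ! \<alpha>) (x ! \<gamma>)"
    by (cases "x ! \<gamma> \<le> x ! \<alpha>") (auto simp: max_def min_def insert_commute)
  obtain c d where cd: "{c, d} = {\<beta>, \<delta>}" "x ! c = max (x ! \<beta>) (x ! \<delta>)" "x ! d = b"
    by (cases "x ! \<delta> \<le> x ! \<beta>") (auto simp: b max_def min_def insert_commute)
  have idx': "distinct [a, c, e, d]" "{a, c, e, d} \<subseteq> {..<length x}"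
    using idx ae(1) cd(1) by (auto simp: doubleton_eq_iff)
  have y': "y ! l = x ! l + x ! d * (of_bool (l \<in> {a, e}) - of_bool (l \<in> {c, d}))"
    if "l < length x" for l
    using y that ae(1) cd by simp
  have "y = shift_mass e d (x ! d) (shift_mass a c (x ! d) x)"
  proof (rule nth_equalityI)
    fix l assume "l < length y"
    with len have "l < length x" by simp
    then show "y ! l = shift_mass e d (x ! d) (shift_mass a c (x ! d) x) ! l"
      using idx'(1) y'[OF \<open>l < length x\<close>]
      by (cases "l = a"; cases "l = c"; cases "l = e"; cases "l = d") auto
  qed (simp add: len)
  moreover have "x ! c \<le> x ! a" "0 \<le> x ! e" "0 \<le> x ! d"
    using ae cd max_le nonneg by auto
  ultimately show ?thesis
    using majorized_shift_mass_twice[OF idx'] cd(3) by simp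
qed

lemma flatten_eq_map: "flatten m n P = map (\<lambda>l. P (l div n) (l mod n)) [0..<m * n]"
proof (induction m)
  case 0
  then show ?case by (simp add: flatten_def)
next
  case (Suc m)
  have "[0..<Suc m * n] = [0..<m * n] @ map (\<lambda>j. m * n + j) [0..<n]"
    using upt_add_eq_append[of 0 "m * n" n] by (simp add: map_add_upt add.commute)
  moreover have "map (\<lambda>l. P (l div n) (l mod n)) (map (\<lambda>j. m * n + j) [0..<n]) = map (P m) [0..<n]"
    by simp
  ultimately show ?case
    using Suc by (simp add: flatten_def)
qed

lemma length_flatten [simp]: "length (flatten m n P) = m * n"
  by (simp add: flatten_eq_map)

lemma nth_flatten [simp]: "l < m * n \<Longrightarrow> flatten m n P ! l = P (l div n) (l mod n)"
  by (simp add: flatten_eq_map)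

lemma flat_index_less: "i < m \<Longrightarrow> j < n \<Longrightarrow> i * n + j < m * (n::nat)"
proof -
  assume "i < m" "j < n"
  then have "i * n + j < Suc i * n" by simp
  also have "\<dots> \<le> m * n" using \<open>i < m\<close> by (intro mult_le_mono1) simp
  finally show ?thesis .
qed

lemma flat_index_eq_iff: "j < n \<Longrightarrow> l = i * n + j \<longleftrightarrow> l div n = i \<and> l mod n = (j::nat)"
  by auto

lemma coupling_add_zero_sum_outer:
  assumes "coupling m n p q P" "(\<Sum>i<m. u i) = 0" "(\<Sum>j<n. v j) = 0"
    and "\<forall>i<m. \<forall>j<n. 0 \<le> P i j + u i * v j"
  shows "coupling m n p q (\<lambda>i j. P i j + u i * v j)"
  using assms by (simp add: coupling_def sum.distrib flip: sum_distrib_left sum_distrib_right)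

definition diagonal_shift :: "(nat \<Rightarrow> nat \<Rightarrow> real) \<Rightarrow> nat \<Rightarrow> nat \<Rightarrow> nat \<Rightarrow> nat \<Rightarrow> real
    \<Rightarrow> nat \<Rightarrow> nat \<Rightarrow> real" where
  "diagonal_shift P i1 i2 j1 j2 b =
     (\<lambda>i j. P i j + b * (of_bool (i = i1) - of_bool (i = i2)) * (of_bool (j = j1) - of_bool (j = j2)))"

lemma coupling_diagonal_shift:
  assumes "coupling m n p q P" "i1 < m" "i2 < m" "j1 < n" "j2 < n"
    and "0 \<le> b" "b \<le> P i1 j2" "b \<le> P i2 j1"
  shows "coupling m n p q (diagonal_shift P i1 i2 j1 j2 b)"
proof -
  define u where "u i = b * (of_bool (i = i1) - of_bool (i = i2))" for i
  define v :: "nat \<Rightarrow> real" where "v j = of_bool (j = j1) - of_bool (j = j2)" for j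
  have "(\<Sum>i<m. u i) = 0" "(\<Sum>j<n. v j) = 0"
    using assms(2-5) by (simp_all add: u_def v_def sum.distrib sum_subtractf flip: sum_distrib_left)
  moreover have "0 \<le> P i j + u i * v j" if "i < m" "j < n" for i j
  proof -
    have "0 \<le> P i j"
      using assms(1) that by (simp add: coupling_def)
    then show ?thesis
      using assms(6-8) by (auto simp: u_def v_def)
  qed
  ultimately show ?thesis
    using coupling_add_zero_sum_outer[OF assms(1)] by (simp add: diagonal_shift_def u_def v_def)
qed

lemma majorized_flatten_diagonal_shift:
  assumes idx: "i1 < m" "i2 < m" "i1 \<noteq> i2" "j1 < n" "j2 < n" "j1 \<noteq> j2"
    and nonneg: "\<forall>i<m. \<forall>j<n. 0 \<le> P i j"
    and b: "b = min (P i1 j2) (P i2 j1)"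
    and max_le: "max (P i1 j2) (P i2 j1) \<le> max (P i1 j1) (P i2 j2)"
  defines "x \<equiv> flatten m n P" and "y \<equiv> flatten m n (diagonal_shift P i1 i2 j1 j2 b)"
  shows "majorized x y \<and> (0 < b \<longrightarrow> strictly_majorized x y)"
proof -
  define A C1 D C2 where "A = i1 * n + j1" and "C1 = i1 * n + j2"
    and "D = i2 * n + j2" and "C2 = i2 * n + j1"
  have flat_idx: "distinct [A, C1, D, C2]" "{A, C1, D, C2} \<subseteq> {..<length x}"
    using idx by (auto simp: x_def A_def C1_def D_def C2_def flat_index_less flat_index_eq_iff)
  have "\<forall>l<length x. y ! l = x ! l + b * (of_bool (l \<in> {A, D}) - of_bool (l \<in> {C1, C2}))"
    using idx
    by (auto simp: x_def y_def diagonal_shift_def A_def C1_def D_def C2_def flat_index_eq_iff)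
  moreover have "x ! A = P i1 j1" "x ! C1 = P i1 j2" "x ! D = P i2 j2" "x ! C2 = P i2 j1"
    using idx by (simp_all add: x_def A_def C1_def D_def C2_def flat_index_less)
  ultimately show ?thesis
    using majorized_shift_mass_2x2[OF flat_idx] nonneg idx b max_le
    by (simp add: x_def y_def)
qed

theorem lemma4p1:
  fixes m n :: nat and p q :: "nat \<Rightarrow> real" and \<Psi> :: "real list \<Rightarrow> real"
    and P :: "nat \<Rightarrow> nat \<Rightarrow> real" and i1 i2 j1 j2 :: nat
  assumes "m \<ge> 2" and "n \<ge> 2"
    and "prob_vec m p" and "prob_vec n q"
    and "\<forall>i<m. p i > 0" and "\<forall>j<n. q j > 0"
    and "strict_schur_concave_on (coupling_set m n p q) \<Psi>"
    and "coupling m n p q P"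
    and "i1 < m" and "i2 < m" and "i1 \<noteq> i2"
    and "j1 < n" and "j2 < n" and "j1 \<noteq> j2"
    and "max (P i1 j1) (P i2 j2) \<ge> max (P i1 j2) (P i2 j1)"
  defines "b \<equiv> min (P i1 j2) (P i2 j1)"
  defines "P' \<equiv> (\<lambda>i j. if i = i1 \<and> j = j1 then P i1 j1 + b
                    else if i = i2 \<and> j = j2 then P i2 j2 + b
                    else if i = i1 \<and> j = j2 then P i1 j2 - b
                    else if i = i2 \<and> j = j1 then P i2 j1 - b
                    else P i j)"
  shows "coupling m n p q P' \<and>
         majorized (flatten m n P) (flatten m n P') \<and>
         \<Psi> (flatten m n P') \<le> \<Psi> (flatten m n P) \<and>
         (b > 0 \<longrightarrow> strictly_majorized (flatten m n P) (flatten m n P') \<and>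
                    \<Psi> (flatten m n P') < \<Psi> (flatten m n P))"
proof -
  have P_nonneg: "\<forall>i<m. \<forall>j<n. 0 \<le> P i j"
    using assms(8) by (simp add: coupling_def)
  have P': "P' = diagonal_shift P i1 i2 j1 j2 b"
    using assms(11,14) by (auto simp: P'_def diagonal_shift_def fun_eq_iff)
  have coupling_P': "coupling m n p q P'"
    unfolding P' using P_nonneg assms(8-10,12,13)
    by (intro coupling_diagonal_shift) (auto simp: b_def)
  have maj: "majorized (flatten m n P) (flatten m n P') \<and>
      (0 < b \<longrightarrow> strictly_majorized (flatten m n P) (flatten m n P'))"
    unfolding P' using P_nonneg assms(9-15) b_def by (intro majorized_flatten_diagonal_shift) auto
  have "flatten m n P \<in> coupling_set m n p q" "flatten m n P' \<in> coupling_set m n p q"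
    using assms(8) coupling_P' by (auto simp: coupling_set_def)
  then have "\<Psi> (flatten m n P') \<le> \<Psi> (flatten m n P)"
    and "0 < b \<Longrightarrow> \<Psi> (flatten m n P') < \<Psi> (flatten m n P)"
    using assms(7) maj unfolding strict_schur_concave_on_def by blast+
  with coupling_P' maj show ?thesis
    by blast
qed

end
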